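(* Let $A$ be an approximately unital Banach algebra. If $A$ has a left bounded approximate identity (respectively, right bounded approximate identity, two-sided bounded approximate identity) contained in ${\mathfrak r}_A$, then $A$ has a left bounded approximate identity (respectively, right, two-sided) contained in ${\mathfrak F}_A$.
   Context: Banach algebras are complex with submultiplicative norm; "unital" means identity of norm 1; approximately unital means having a contractive approximate identity. A left (resp. right, two-sided) bounded approximate identity is a bounded net $(e_t)$ with $e_ta\to a$ (resp. $ae_t\to a$, both) for all $a\in A$. Multiplier unitization $A^1$: $A$ if unital, otherwise $A+\mathbb{C}1$ with $\|a+\lambda1\|=\sup\{\|ac+\lambda c\|:c\in A,\|c\|\le1\}$. ${\mathfrak F}_A=\{a\in A:\|1-a\|_{A^1}\le1\}$; ${\mathfrak r}_A=\{a\in A:\mathrm{Re}\,\varphi(a)\ge0$ for all $\varphi\in(A^1)^*$ with $\|\varphi\|=\varphi(1)=1\}$. *)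

theory Defs
  imports "HOL-Analysis.Analysis"
begin

text \<open>A complex Banach algebra: a type of class real_normed_algebra (associative,
  submultiplicative norm, not necessarily unital) and banach (complete), together
  with a complex scalar multiplication sc extending scaleR and compatible with
  the norm and the product.\<close>

definition complex_scalars :: "(complex \<Rightarrow> 'a::real_normed_algebra \<Rightarrow> 'a) \<Rightarrow> bool" where
  "complex_scalars sc \<longleftrightarrow>
     (\<forall>c d x. sc c (sc d x) = sc (c * d) x) \<and>
     (\<forall>c x y. sc c (x + y) = sc c x + sc c y) \<and>
     (\<forall>c d x. sc (c + d) x = sc c x + sc d x) \<and>
     (\<forall>r x. sc (complex_of_real r) x = scaleR r x) \<and>
     (\<forall>c x. norm (sc c x) = cmod c * norm x) \<and>
     (\<forall>c x y. sc c (x * y) = sc c x * y \<and> sc c (x * y) = x * sc c y)"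

text \<open>Norm of a + l1 in the multiplier unitization A^1:
  sup { norm (a c + l c) : c in A, norm c <= 1 }.\<close>

definition mu_norm :: "(complex \<Rightarrow> 'a::real_normed_algebra \<Rightarrow> 'a) \<Rightarrow> 'a \<Rightarrow> complex \<Rightarrow> real" where
  "mu_norm sc a l = Sup {norm (a * c + sc l c) | c. norm c \<le> 1}"

text \<open>F_A = { a : norm (1 - a) in A^1 <= 1 }; note 1 - a = (-a) + 1*1.\<close>

definition FA :: "(complex \<Rightarrow> 'a::real_normed_algebra \<Rightarrow> 'a) \<Rightarrow> 'a set" where
  "FA sc = {a. mu_norm sc (- a) 1 \<le> 1}"

text \<open>States of A^1: functionals phi(a + l1) = psi a + l (so phi 1 = 1), psi complex
  linear on A, with norm phi <= 1 on A^1.\<close>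

definition unit_state :: "(complex \<Rightarrow> 'a::real_normed_algebra \<Rightarrow> 'a) \<Rightarrow> ('a \<Rightarrow> complex) \<Rightarrow> bool" where
  "unit_state sc \<psi> \<longleftrightarrow>
     (\<forall>x y. \<psi> (x + y) = \<psi> x + \<psi> y) \<and>
     (\<forall>c x. \<psi> (sc c x) = c * \<psi> x) \<and>
     (\<forall>a l. cmod (\<psi> a + l) \<le> mu_norm sc a l)"

definition rA :: "(complex \<Rightarrow> 'a::real_normed_algebra \<Rightarrow> 'a) \<Rightarrow> 'a set" where
  "rA sc = {a. \<forall>\<psi>. unit_state sc \<psi> \<longrightarrow> Re (\<psi> a) \<ge> 0}"

text \<open>Nets are represented by a proper filter F on an index type and a map e.\<close>

definition left_bai :: "'i filter \<Rightarrow> ('i \<Rightarrow> 'a::real_normed_algebra) \<Rightarrow> bool" where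
  "left_bai F e \<longleftrightarrow> F \<noteq> bot \<and> (\<exists>M. \<forall>i. norm (e i) \<le> M) \<and>
     (\<forall>a. ((\<lambda>i. e i * a) \<longlongrightarrow> a) F)"

definition right_bai :: "'i filter \<Rightarrow> ('i \<Rightarrow> 'a::real_normed_algebra) \<Rightarrow> bool" where
  "right_bai F e \<longleftrightarrow> F \<noteq> bot \<and> (\<exists>M. \<forall>i. norm (e i) \<le> M) \<and>
     (\<forall>a. ((\<lambda>i. a * e i) \<longlongrightarrow> a) F)"

definition two_sided_bai :: "'i filter \<Rightarrow> ('i \<Rightarrow> 'a::real_normed_algebra) \<Rightarrow> bool" where
  "two_sided_bai F e \<longleftrightarrow> left_bai F e \<and> right_bai F e"

definition contractive_ai :: "'i filter \<Rightarrow> ('i \<Rightarrow> 'a::real_normed_algebra) \<Rightarrow> bool" where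
  "contractive_ai F e \<longleftrightarrow> two_sided_bai F e \<and> (\<forall>i. norm (e i) \<le> 1)"

end

(*
  Let e \<in> r_A with norm e \<le> M and put x = \<epsilon> e with norm x < 1. A Hahn--Banach functional
  norming y induces a state of A^1, so accretivity of e gives norm ((1 + x) y) \<ge> norm y.
  Hence the element s of A with 1 - s = (1 + x)\<inverse> satisfies norm ((1 - s)^k c) \<le> norm c for
  all k, and the Cesaro means g_n of 1 - (1 - s)^k, k = 1..n+1, lie in F_A. They are bounded
  by 2 thanks to the contractive approximate identity, and telescoping gives
  x - g_n x = x - x g_n = (1 - (1 - s)^(n+1)) / (n + 1), so g_n acts on either side like e up
  to an error O(1/(n \<epsilon>)). The net (g_n)_(i,n) built from a bounded approximate identity (e_i)
  in r_A is therefore a bounded approximate identity of the same kind in F_A.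
*)

theory Submission
  imports Defs
begin

section \<open>Sublinear functionals and the Hahn--Banach theorem\<close>

definition sublinear :: "('a::real_vector \<Rightarrow> real) \<Rightarrow> bool" where
  "sublinear q \<longleftrightarrow> (\<forall>a b. q (a + b) \<le> q a + q b) \<and> (\<forall>c a. 0 < c \<longrightarrow> q (c *\<^sub>R a) \<le> c * q a)"

lemma sublinear_add: "sublinear q \<Longrightarrow> q (a + b) \<le> q a + q b"
  by (simp add: sublinear_def)

lemma sublinear_scaleR_le: "sublinear q \<Longrightarrow> 0 < c \<Longrightarrow> q (c *\<^sub>R a) \<le> c * q a"
  by (simp add: sublinear_def)

lemma sublinear_scaleR:
  assumes "sublinear q" "0 < c"
  shows "q (c *\<^sub>R a) = c * q a"
proof -
  have "q a = q (inverse c *\<^sub>R (c *\<^sub>R a))"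
    using assms by simp
  also have "\<dots> \<le> inverse c * q (c *\<^sub>R a)"
    by (rule sublinear_scaleR_le) (use assms in simp_all)
  finally have "c * q a \<le> q (c *\<^sub>R a)"
    using assms by (simp add: field_simps)
  with sublinear_scaleR_le[OF assms, of a] show ?thesis by linarith
qed

lemma sublinear_zero: "sublinear q \<Longrightarrow> q 0 = 0"
  using sublinear_scaleR[of q 2 0] by simp

lemma sublinear_scaleR_nonneg: "sublinear q \<Longrightarrow> 0 \<le> c \<Longrightarrow> q (c *\<^sub>R a) = c * q a"
  by (cases "c = 0") (simp_all add: sublinear_zero sublinear_scaleR)

lemma sublinear_neg_le: "sublinear q \<Longrightarrow> - q a \<le> q (- a)"
  using sublinear_add[of q a "- a"] by (simp add: sublinear_zero)

lemma le_Inf_add_Inf: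
  fixes U V :: "real set"
  assumes "U \<noteq> {}" "V \<noteq> {}" "\<And>u v. u \<in> U \<Longrightarrow> v \<in> V \<Longrightarrow> r \<le> u + v"
  shows "r \<le> Inf U + Inf V"
proof -
  have "r - Inf V \<le> u" if "u \<in> U" for u
  proof -
    have "r - u \<le> Inf V"
    proof (rule cInf_greatest)
      show "r - u \<le> v" if "v \<in> V" for v
        using assms(3)[OF \<open>u \<in> U\<close> that] by simp
    qed (use assms in auto)
    then show ?thesis by simp
  qed
  then have "r - Inf V \<le> Inf U"
    using assms(1) by (intro cInf_greatest)
  then show ?thesis by simp
qed

text \<open>A test minorant: a minimal sublinear q equals descent q z for every z, hence satisfies
  q (-z) \<le> - q z and is linear.\<close>

definition descent :: "('a::real_vector \<Rightarrow> real) \<Rightarrow> 'a \<Rightarrow> 'a \<Rightarrow> real" where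
  "descent q z x = Inf {q (x + t *\<^sub>R z) - t * q z | t. 0 \<le> t}"

lemma descent_le:
  assumes "sublinear q" "0 \<le> t"
  shows "descent q z x \<le> q (x + t *\<^sub>R z) - t * q z"
  unfolding descent_def
proof (rule cInf_lower)
  have "- q (- x) \<le> q (x + s *\<^sub>R z) - s * q z" if "0 \<le> s" for s
    using sublinear_add[OF assms(1), of "x + s *\<^sub>R z" "- x"]
      sublinear_scaleR_nonneg[OF assms(1) that] by simp
  then show "bdd_below {q (x + t *\<^sub>R z) - t * q z | t. 0 \<le> t}"
    by (auto intro!: bdd_belowI)
qed (use assms in auto)

lemma sublinear_descent:
  assumes q: "sublinear q"
  shows "sublinear (descent q z)"
proof -
  let ?D = "\<lambda>x. {q (x + t *\<^sub>R z) - t * q z | t. 0 \<le> t}"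
  have ne: "?D x \<noteq> {}" for x by auto
  have "descent q z (a + b) \<le> descent q z a + descent q z b" for a b
    unfolding descent_def[of q z a] descent_def[of q z b]
  proof (rule le_Inf_add_Inf[OF ne ne])
    fix u v assume "u \<in> ?D a" "v \<in> ?D b"
    then obtain t s where ts: "0 \<le> t" "0 \<le> s"
      and u: "u = q (a + t *\<^sub>R z) - t * q z" and v: "v = q (b + s *\<^sub>R z) - s * q z" by blast
    have "descent q z (a + b) \<le> q ((a + t *\<^sub>R z) + (b + s *\<^sub>R z)) - (t + s) * q z"
      using descent_le[OF q, of "t + s" z "a + b"] ts by (simp add: algebra_simps)
    also have "\<dots> \<le> u + v"
      using sublinear_add[OF q, of "a + t *\<^sub>R z" "b + s *\<^sub>R z"] u v by (simp add: algebra_simps)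
    finally show "descent q z (a + b) \<le> u + v" .
  qed
  moreover have "descent q z (c *\<^sub>R a) \<le> c * descent q z a" if c: "0 < c" for c a
  proof -
    have "descent q z (c *\<^sub>R a) / c \<le> descent q z a"
      unfolding descent_def[of q z a]
    proof (rule cInf_greatest[OF ne], clarify)
      fix t :: real assume t: "0 \<le> t"
      have "descent q z (c *\<^sub>R a) \<le> q (c *\<^sub>R (a + t *\<^sub>R z)) - (c * t) * q z"
        using descent_le[OF q, of "c * t" z "c *\<^sub>R a"] t c by (simp add: algebra_simps)
      also have "\<dots> = c * (q (a + t *\<^sub>R z) - t * q z)"
        by (simp only: sublinear_scaleR[OF q c] right_diff_distrib mult.assoc)
      finally show "descent q z (c *\<^sub>R a) / c \<le> q (a + t *\<^sub>R z) - t * q z"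
        using c by (simp add: field_simps)
    qed
    then show ?thesis using c by (simp add: field_simps)
  qed
  ultimately show ?thesis unfolding sublinear_def by blast
qed

lemma descent_le_self: "sublinear q \<Longrightarrow> descent q z x \<le> q x"
  using descent_le[of q 0] by simp

lemma descent_neg_le: "sublinear q \<Longrightarrow> descent q z (- z) \<le> - q z"
  using descent_le[of q 1 z "- z"] by (simp add: sublinear_zero)

lemma sublinear_Inf_chain:
  fixes Q :: "('a::real_vector \<Rightarrow> real) set"
  assumes ne: "Q \<noteq> {}" and sub: "\<And>q. q \<in> Q \<Longrightarrow> sublinear q"
    and bdd: "\<And>q x. q \<in> Q \<Longrightarrow> N x \<le> q x"
    and chain: "\<And>q q'. q \<in> Q \<Longrightarrow> q' \<in> Q \<Longrightarrow> q \<le> q' \<or> q' \<le> q"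
  shows "sublinear (\<lambda>x. INF q\<in>Q. q x)"
proof -
  have lower: "(INF q\<in>Q. q x) \<le> q x" if "q \<in> Q" for q x
    using that bdd by (intro cINF_lower bdd_belowI[of _ "N x"]) auto
  have "(INF q\<in>Q. q (a + b)) \<le> (INF q\<in>Q. q a) + (INF q\<in>Q. q b)" for a b
  proof (rule le_Inf_add_Inf)
    fix u v assume "u \<in> (\<lambda>q. q a) ` Q" "v \<in> (\<lambda>q. q b) ` Q"
    then obtain q q' where q: "q \<in> Q" "q' \<in> Q" and uv: "u = q a" "v = q' b" by blast
    have p: "(INF q\<in>Q. q (a + b)) \<le> p a + p b" if "p \<in> Q" for p
      using lower[OF that] sublinear_add[OF sub[OF that]] by (meson order_trans)
    from chain[OF q] show "(INF q\<in>Q. q (a + b)) \<le> u + v"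
    proof
      assume "q \<le> q'"
      then show ?thesis using p[OF q(1)] le_funD[of q q' b] uv by linarith
    next
      assume "q' \<le> q"
      then show ?thesis using p[OF q(2)] le_funD[of q' q a] uv by linarith
    qed
  qed (use ne in auto)
  moreover have "(INF q\<in>Q. q (c *\<^sub>R a)) \<le> c * (INF q\<in>Q. q a)" if c: "0 < c" for c a
  proof -
    have "(INF q\<in>Q. q (c *\<^sub>R a)) / c \<le> (INF q\<in>Q. q a)"
    proof (rule cINF_greatest[OF ne])
      fix q assume "q \<in> Q"
      then show "(INF q\<in>Q. q (c *\<^sub>R a)) / c \<le> q a"
        using lower[of q "c *\<^sub>R a"] sublinear_scaleR[OF sub c] c by (simp add: field_simps)
    qed
    then show ?thesis using c by (simp add: field_simps)
  qed
  ultimately show ?thesis unfolding sublinear_def by blast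
qed

lemma exists_minimal_sublinear_le:
  assumes p: "sublinear p"
  shows "\<exists>q. sublinear q \<and> q \<le> p \<and> (\<forall>q'. sublinear q' \<longrightarrow> q' \<le> q \<longrightarrow> q' = q)"
proof -
  define S where "S = {q. sublinear q \<and> q \<le> p}"
  let ?R = "relation_of (\<lambda>q q'. q' \<le> q) S"
  have "\<exists>q\<in>S. \<forall>q'\<in>S. q' \<le> q \<longrightarrow> q' = q"
  proof (rule predicate_Zorn)
    show "partial_order_on S ?R"
      by (rule partial_order_on_relation_ofI) (metis order_refl, metis order_trans, metis antisym)
  next
    fix C assume C: "C \<in> Chains ?R"
    show "\<exists>m\<in>S. \<forall>q\<in>C. m \<le> q"
    proof (cases "C = {}")
      case True
      then show ?thesis using p unfolding S_def by blast
    next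
      case False
      have CS: "sublinear q \<and> q \<le> p" if "q \<in> C" for q
        using Chains_relation_of[OF C] that unfolding S_def by blast
      have bdd: "- p (- x) \<le> q x" if "q \<in> C" for q x
        using CS[OF that] sublinear_neg_le[of q "- x"] le_funD[of q p "- x"] by force
      have chain: "q \<le> q' \<or> q' \<le> q" if "q \<in> C" "q' \<in> C" for q q'
        using C that unfolding Chains_def relation_of_def by blast
      have m: "sublinear (\<lambda>x. INF q\<in>C. q x)"
        by (rule sublinear_Inf_chain[where N = "\<lambda>x. - p (- x)", OF False]) (simp_all add: CS bdd chain)
      have lower: "(\<lambda>x. INF q\<in>C. q x) \<le> q" if "q \<in> C" for q
      proof (rule le_funI)
        show "(INF q\<in>C. q x) \<le> q x" for x
          using that bdd by (intro cINF_lower bdd_belowI[of _ "- p (- x)"]) auto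
      qed
      obtain q0 where q0: "q0 \<in> C" using False by blast
      have "(\<lambda>x. INF q\<in>C. q x) \<le> p"
        using order_trans[OF lower[OF q0]] CS[OF q0] by blast
      with m lower show ?thesis unfolding S_def by blast
    qed
  qed
  then obtain q where "q \<in> S" and min: "\<And>q'. q' \<in> S \<Longrightarrow> q' \<le> q \<Longrightarrow> q' = q"
    by blast
  then have q: "sublinear q" "q \<le> p" unfolding S_def by simp_all
  have "q' = q" if "sublinear q'" "q' \<le> q" for q'
    using that order_trans[OF \<open>q' \<le> q\<close> q(2)] by (intro min) (simp add: S_def)
  with q show ?thesis by blast
qed

lemma linear_if_minimal_sublinear:
  assumes q: "sublinear q" and min: "\<And>q'. sublinear q' \<Longrightarrow> q' \<le> q \<Longrightarrow> q' = q"
  shows "linear q"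
proof -
  have odd: "q (- z) = - q z" for z
  proof -
    have "descent q z = q"
      using min sublinear_descent[OF q] descent_le_self[OF q] by (simp add: le_fun_def)
    then show ?thesis
      using descent_neg_le[OF q, of z] sublinear_neg_le[OF q, of z] by simp
  qed
  have "q (a + b) = q a + q b" for a b
    using sublinear_add[OF q, of a b] sublinear_add[OF q, of "- a" "- b"] odd[of a] odd[of b] odd[of "a + b"]
    by (simp add: algebra_simps)
  moreover have "q (c *\<^sub>R a) = c * q a" for c a
  proof (cases "0 \<le> c")
    case True
    then show ?thesis by (rule sublinear_scaleR_nonneg[OF q])
  next
    case False
    then have "q (c *\<^sub>R a) = - q ((- c) *\<^sub>R a)"
      using odd[of "(- c) *\<^sub>R a"] by simp
    also have "\<dots> = c * q a"
      using sublinear_scaleR_nonneg[OF q, of "- c" a] False by simp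
    finally show ?thesis .
  qed
  ultimately show ?thesis by (simp add: linear_iff)
qed

lemma sublinear_dominates_linear:
  assumes p: "sublinear p"
  shows "\<exists>f. linear f \<and> (\<forall>x. f x \<le> p x) \<and> f y = p y"
proof -
  obtain f where f: "sublinear f" "f \<le> descent p y"
    and min: "\<And>q'. sublinear q' \<Longrightarrow> q' \<le> f \<Longrightarrow> q' = f"
    using exists_minimal_sublinear_le[OF sublinear_descent[OF p]] by blast
  have lin: "linear f" by (rule linear_if_minimal_sublinear[OF f(1) min])
  have below: "f x \<le> p x" for x
    using le_funD[OF f(2), of x] descent_le_self[OF p, of y x] by linarith
  have "- f y = f (- y)"
    using lin by (simp add: linear_neg)
  also have "\<dots> \<le> - p y"
    using le_funD[OF f(2), of "- y"] descent_neg_le[OF p, of y] by linarith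
  finally have "f y = p y" using below[of y] by linarith
  with lin below show ?thesis by blast
qed

lemma sublinear_norm: "sublinear norm"
  by (simp add: sublinear_def norm_triangle_ineq)

section \<open>Norming functionals and states\<close>

lemma sc_of_real: "complex_scalars sc \<Longrightarrow> sc (complex_of_real r) x = r *\<^sub>R x"
  by (simp add: complex_scalars_def)

lemma sc_sc: "complex_scalars sc \<Longrightarrow> sc c (sc d x) = sc (c * d) x"
  by (simp add: complex_scalars_def)

lemma sc_add_scalar: "complex_scalars sc \<Longrightarrow> sc (c + d) x = sc c x + sc d x"
  by (simp add: complex_scalars_def)

lemma sc_add: "complex_scalars sc \<Longrightarrow> sc c (x + y) = sc c x + sc c y"
  by (simp add: complex_scalars_def)

lemma norm_sc: "complex_scalars sc \<Longrightarrow> norm (sc c x) = cmod c * norm x"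
  by (simp add: complex_scalars_def)

lemma sc_mult_left: "complex_scalars sc \<Longrightarrow> sc c (x * y) = sc c x * y"
  by (simp add: complex_scalars_def)

lemma sc_one: "complex_scalars sc \<Longrightarrow> sc 1 x = x"
  using sc_of_real[of sc 1 x] by simp

lemma sc_scaleR: "complex_scalars sc \<Longrightarrow> sc c (r *\<^sub>R x) = r *\<^sub>R sc c x"
  by (metis mult.commute sc_of_real sc_sc)

lemma linear_sc:
  assumes cs: "complex_scalars sc" and f: "linear f"
  shows "f (sc c x) = Re c * f x + Im c * f (sc \<i> x)"
proof -
  have "sc c x = sc (complex_of_real (Re c) + \<i> * complex_of_real (Im c)) x"
    by (metis complex_eq)
  also have "\<dots> = sc (complex_of_real (Re c)) x + sc (\<i> * complex_of_real (Im c)) x"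
    by (rule sc_add_scalar[OF cs])
  also have "\<dots> = Re c *\<^sub>R x + Im c *\<^sub>R sc \<i> x"
    by (simp add: sc_of_real[OF cs] sc_sc[OF cs, symmetric] sc_scaleR[OF cs])
  finally show ?thesis
    using f by (simp add: linear_add linear_scale)
qed

definition norming_functional :: "(complex \<Rightarrow> 'a::real_normed_vector \<Rightarrow> 'a) \<Rightarrow> ('a \<Rightarrow> complex) \<Rightarrow> 'a \<Rightarrow> bool" where
  "norming_functional sc F y \<longleftrightarrow>
     (\<forall>a b. F (a + b) = F a + F b) \<and> (\<forall>c a. F (sc c a) = c * F a) \<and>
     (\<forall>x. cmod (F x) \<le> norm x) \<and> F y = complex_of_real (norm y)"

text \<open>Complex Hahn--Banach: the real functional f norming y is complexified as
  x \<mapsto> f x - i f (i x).\<close>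

lemma exists_norming_functional:
  fixes sc :: "complex \<Rightarrow> 'a::real_normed_algebra \<Rightarrow> 'a"
  assumes cs: "complex_scalars sc"
  shows "\<exists>F. norming_functional sc F y"
proof -
  obtain f where f: "linear f" and f_le: "\<And>x. f x \<le> norm x" and fy: "f y = norm y"
    using sublinear_dominates_linear[OF sublinear_norm, of y] by blast
  define F where "F x = Complex (f x) (- f (sc \<i> x))" for x
  have add: "F (a + b) = F a + F b" for a b
    using f by (simp add: F_def sc_add[OF cs] linear_add complex_eq_iff)
  have mult: "F (sc c a) = c * F a" for c a
    using linear_sc[OF cs f, of c a] linear_sc[OF cs f, of "\<i> * c" a]
    by (simp add: F_def sc_sc[OF cs] complex_eq_iff algebra_simps)
  have bound: "cmod (F x) \<le> norm x" for x
  proof (cases "F x = 0")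
    case False
    define w where "w = cnj (F x) / complex_of_real (cmod (F x))"
    have "complex_of_real (cmod (F x)) = w * F x"
      using False complex_norm_square[of "F x"] by (simp add: w_def power2_eq_square field_simps)
    also have "\<dots> = F (sc w x)" by (rule mult[symmetric])
    finally have "cmod (F x) = Re (F (sc w x))"
      by (metis Re_complex_of_real)
    also have "\<dots> = f (sc w x)" by (simp add: F_def)
    also have "\<dots> \<le> norm (sc w x)" by (rule f_le)
    also have "\<dots> = norm x"
      using False by (simp add: norm_sc[OF cs] w_def norm_divide)
    finally show ?thesis .
  qed simp
  have "F y = complex_of_real (norm y)"
  proof -
    have "cmod (F y) \<le> Re (F y)"
      using bound[of y] fy by (simp add: F_def)
    then have "Im (F y) = 0"
      using abs_Re_le_cmod[of "F y"] abs_ge_self[of "Re (F y)"] by (intro Im_eq_0) linarith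
    then show ?thesis using fy by (simp add: F_def complex_eq_iff)
  qed
  with add mult bound show ?thesis unfolding norming_functional_def by blast
qed

lemma norm_le_mu_norm:
  assumes cs: "complex_scalars sc" and c: "norm c \<le> 1"
  shows "norm (a * c + sc l c) \<le> mu_norm sc a l"
  unfolding mu_norm_def
proof (rule cSup_upper)
  have "norm (a * c + sc l c) \<le> norm a + cmod l" if "norm c \<le> 1" for c
  proof -
    have "norm (a * c + sc l c) \<le> norm a * norm c + cmod l * norm c"
      using norm_triangle_ineq[of "a * c" "sc l c"] norm_mult_ineq[of a c] norm_sc[OF cs, of l c]
      by linarith
    also have "\<dots> \<le> norm a + cmod l"
      using that by (intro add_mono mult_left_le) auto
    finally show ?thesis .
  qed
  then show "bdd_above {norm (a * c + sc l c) | c. norm c \<le> 1}"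
    by (auto intro!: bdd_aboveI)
qed (use c in auto)

lemma FA_if_contractive:
  assumes cs: "complex_scalars sc" and g: "\<And>c. norm (c - g * c) \<le> norm c"
  shows "g \<in> FA sc"
  unfolding FA_def mu_norm_def
proof (simp, rule cSup_least)
  show "{norm (sc 1 c - g * c) |c. norm c \<le> 1} \<noteq> {}"
    by (auto intro!: exI[of _ 0])
  show "v \<le> 1" if "v \<in> {norm (sc 1 c - g * c) |c. norm c \<le> 1}" for v
    using that g by (auto simp: sc_one[OF cs] intro: order_trans)
qed

lemma unit_state_vector_state:
  assumes cs: "complex_scalars sc" and F: "norming_functional sc F y" and "y \<noteq> 0"
  shows "unit_state sc (\<lambda>b. F (b * y) / complex_of_real (norm y))"
proof -
  have Fa: "F (a + b) = F a + F b" and Fc: "F (sc c a) = c * F a" and Fn: "cmod (F x) \<le> norm x"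
    and Fy: "F y = complex_of_real (norm y)" for a b c x
    using F unfolding norming_functional_def by blast+
  have n: "norm y > 0" using \<open>y \<noteq> 0\<close> by simp
  have "cmod (F (a * y) / complex_of_real (norm y) + l) \<le> mu_norm sc a l" for a l
  proof -
    define c where "c = (1 / norm y) *\<^sub>R y"
    have "F (a * y) / complex_of_real (norm y) + l = F (a * y + sc l y) / complex_of_real (norm y)"
      using n by (simp add: Fa Fc Fy field_simps)
    then have "cmod (F (a * y) / complex_of_real (norm y) + l) \<le> norm (a * y + sc l y) / norm y"
      using n Fn by (simp add: norm_divide divide_right_mono)
    also have "\<dots> = norm (a * c + sc l c)"
      using n by (simp add: c_def sc_scaleR[OF cs] scaleR_add_right[symmetric])
    also have "\<dots> \<le> mu_norm sc a l"
      by (rule norm_le_mu_norm[OF cs]) (use n in \<open>simp add: c_def\<close>)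
    finally show ?thesis .
  qed
  then show ?thesis
    unfolding unit_state_def
    by (simp add: Fa Fc distrib_right add_divide_distrib sc_mult_left[OF cs, symmetric])
qed

lemma rA_norming_functional_Re_nonneg:
  assumes cs: "complex_scalars sc" and F: "norming_functional sc F y" and e: "e \<in> rA sc"
  shows "0 \<le> Re (F (e * y))"
proof (cases "y = 0")
  case True
  have "F 0 = F 0 + F 0" using F unfolding norming_functional_def by (metis add_0)
  then show ?thesis using True by simp
next
  case False
  then have "0 \<le> Re (F (e * y) / complex_of_real (norm y))"
    using e unit_state_vector_state[OF cs F] unfolding rA_def by blast
  then show ?thesis using False by (simp add: zero_le_divide_iff)
qed

lemma rA_norm_le_add_mult:
  assumes cs: "complex_scalars sc" and e: "e \<in> rA sc" and t: "0 \<le> t"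
  shows "norm y \<le> norm (y + t *\<^sub>R (e * y))"
proof -
  obtain F where F: "norming_functional sc F y"
    using exists_norming_functional[OF cs] by blast
  have Fa: "F (a + b) = F a + F b" and Fn: "cmod (F x) \<le> norm x"
    and Fy: "F y = complex_of_real (norm y)" for a b x
    using F unfolding norming_functional_def by blast+
  have Fr: "F (r *\<^sub>R x) = complex_of_real r * F x" for r x
    using F sc_of_real[OF cs, of r x] unfolding norming_functional_def by metis
  have "norm y \<le> norm y + t * Re (F (e * y))"
    using rA_norming_functional_Re_nonneg[OF cs F e] t by simp
  also have "\<dots> = Re (F (y + t *\<^sub>R (e * y)))"
    by (simp add: Fa Fr Fy)
  also have "\<dots> \<le> norm (y + t *\<^sub>R (e * y))"
    using complex_Re_le_cmod Fn order_trans by blast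
  finally show ?thesis .
qed

section \<open>Resolvents and Cesaro means\<close>

text \<open>The element s is x (1 + x)\<inverse> of the unitization, obtained inside A as the fixed point
  of the contraction s \<mapsto> x - x s; the fixed point of s \<mapsto> x - s x is the same element.\<close>

lemma exists_resolvent:
  fixes x :: "'a::{real_normed_algebra,banach}"
  assumes x: "norm x < 1"
  shows "\<exists>s. x * s = x - s \<and> s * x = x - s"
proof -
  have "\<exists>!s. x - x * s = s"
  proof (rule banach_fix_type[OF norm_ge_zero x], intro allI)
    fix a b
    show "dist (x - x * a) (x - x * b) \<le> norm x * dist a b"
      using norm_mult_ineq[of x "b - a"] by (simp add: dist_norm right_diff_distrib norm_minus_commute)
  qed
  then obtain s where s: "s = x - x * s" by metis
  have "\<exists>!s. x - s * x = s"
  proof (rule banach_fix_type[OF norm_ge_zero x], intro allI)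
    fix a b
    show "dist (x - a * x) (x - b * x) \<le> norm x * dist a b"
      using norm_mult_ineq[of "b - a" x] by (simp add: dist_norm left_diff_distrib norm_minus_commute mult.commute)
  qed
  then obtain s' where s': "s' = x - s' * x" by metis
  have "s' * s = s' * x - s' * x * s"
    by (subst s) (simp add: right_diff_distrib mult.assoc)
  moreover have "s' * s = x * s - s' * x * s"
    by (subst s') (simp add: left_diff_distrib)
  ultimately have "s' * x = x * s" by simp
  then have "s' = s" using s s' by simp
  have "x * s = x - s" by (subst (2) s) simp
  moreover have "s' * x = x - s'" by (subst (2) s') simp
  ultimately show ?thesis using \<open>s' = s\<close> by blast
qed

text \<open>one_minus_pow s k is the element 1 - (1 - s)^k of the unitization, which lies in A.\<close>

fun one_minus_pow :: "'a::ring \<Rightarrow> nat \<Rightarrow> 'a" where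
  "one_minus_pow s 0 = 0"
| "one_minus_pow s (Suc k) = s + one_minus_pow s k - one_minus_pow s k * s"

lemma one_minus_pow_Suc_mult:
  "c - one_minus_pow s (Suc k) * c = (c - s * c) - one_minus_pow s k * (c - s * c)"
  by (simp add: algebra_simps mult.assoc)

lemma norm_one_minus_pow_defect_le:
  fixes s :: "'a::real_normed_algebra"
  assumes "\<And>c. norm (c - s * c) \<le> norm c"
  shows "norm (c - one_minus_pow s k * c) \<le> norm c"
proof (induction k arbitrary: c)
  case (Suc k)
  have "norm (c - one_minus_pow s (Suc k) * c) \<le> norm (c - s * c)"
    unfolding one_minus_pow_Suc_mult by (rule Suc.IH)
  also have "\<dots> \<le> norm c" by (rule assms)
  finally show ?case .
qed simp

lemma one_minus_pow_commute:
  assumes "s * x = x * s"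
  shows "one_minus_pow s k * x = x * one_minus_pow s k"
proof (induction k)
  case (Suc k)
  have "one_minus_pow s k * s * x = x * (one_minus_pow s k * s)"
    by (metis Suc.IH assms mult.assoc)
  with Suc.IH show ?case by (simp add: algebra_simps assms)
qed simp

lemma resolvent_one_minus_pow:
  assumes xs: "x * s = x - s" and sx: "s * x = x - s"
  shows "x - one_minus_pow s (Suc k) * x = one_minus_pow s (Suc k) - one_minus_pow s k"
    and "x - x * one_minus_pow s (Suc k) = one_minus_pow s (Suc k) - one_minus_pow s k"
proof -
  have comm: "one_minus_pow s k * x = x * one_minus_pow s k"
    by (rule one_minus_pow_commute) (simp add: xs sx)
  show "x - one_minus_pow s (Suc k) * x = one_minus_pow s (Suc k) - one_minus_pow s k"
    by (simp add: algebra_simps sx)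
  show "x - x * one_minus_pow s (Suc k) = one_minus_pow s (Suc k) - one_minus_pow s k"
  proof -
    have "x * one_minus_pow s (Suc k) = x * s + one_minus_pow s k * x - one_minus_pow s k * (x * s)"
      by (simp add: distrib_left right_diff_distrib comm flip: mult.assoc)
    then show ?thesis by (simp add: xs algebra_simps)
  qed
qed

lemma norm_defect_resolvent_le:
  assumes cs: "complex_scalars sc" and e: "e \<in> rA sc" and "0 \<le> t"
    and xs: "(t *\<^sub>R e) * s = t *\<^sub>R e - s"
  shows "norm (c - s * c) \<le> norm c"
proof -
  have "(c - s * c) + t *\<^sub>R (e * (c - s * c)) = c"
    using arg_cong[OF xs, of "\<lambda>z. c - z * c"] by (simp add: algebra_simps mult.assoc)
  then show ?thesis
    using rA_norm_le_add_mult[OF cs e \<open>0 \<le> t\<close>, of "c - s * c"] by simp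
qed

lemma norm_le_two_if_defect_le:
  fixes p :: "'a::real_normed_algebra" and u :: "'i \<Rightarrow> 'a"
  assumes u: "right_bai F u" "\<And>j. norm (u j) \<le> 1" and p: "\<And>c. norm (c - p * c) \<le> norm c"
  shows "norm p \<le> 2"
proof -
  have "F \<noteq> bot" and lim: "((\<lambda>j. p * u j) \<longlongrightarrow> p) F"
    using u unfolding right_bai_def by auto
  have "norm (p * u j) \<le> 2" for j
    using norm_triangle_ineq4[of "u j" "u j - p * u j"] p[of "u j"] u(2)[of j] by simp
  then show ?thesis
    using tendsto_upperbound[OF tendsto_norm[OF lim]] \<open>F \<noteq> bot\<close> by auto
qed

definition cesaro_mean :: "(nat \<Rightarrow> 'a::real_vector) \<Rightarrow> nat \<Rightarrow> 'a" where
  "cesaro_mean f n = (1 / real (Suc n)) *\<^sub>R (\<Sum>k<Suc n. f k)"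

lemma norm_cesaro_mean_le:
  fixes f :: "nat \<Rightarrow> 'a::real_normed_vector"
  assumes "\<And>k. norm (f k) \<le> B"
  shows "norm (cesaro_mean f n) \<le> B"
proof -
  have "norm (\<Sum>k<Suc n. f k) \<le> real (Suc n) * B"
    using norm_sum[of f "{..<Suc n}"] sum_mono[of "{..<Suc n}" "\<lambda>k. norm (f k)" "\<lambda>_. B"] assms
    by (simp del: sum.lessThan_Suc)
  then show ?thesis
    by (simp add: cesaro_mean_def field_simps del: of_nat_Suc sum.lessThan_Suc)
qed

lemma cesaro_mean_const: "cesaro_mean (\<lambda>_. c) n = c"
  by (simp add: cesaro_mean_def sum_constant_scaleR del: sum.lessThan_Suc)

lemma cesaro_mean_diff: "cesaro_mean (\<lambda>k. f k - g k) n = cesaro_mean f n - cesaro_mean g n"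
  by (simp add: cesaro_mean_def sum_subtractf scaleR_diff_right)

lemma cesaro_mean_mult_right:
  fixes f :: "nat \<Rightarrow> 'a::real_algebra"
  shows "cesaro_mean f n * c = cesaro_mean (\<lambda>k. f k * c) n"
  by (simp add: cesaro_mean_def sum_distrib_right del: sum.lessThan_Suc)

lemma cesaro_mean_mult_left:
  fixes f :: "nat \<Rightarrow> 'a::real_algebra"
  shows "c * cesaro_mean f n = cesaro_mean (\<lambda>k. c * f k) n"
  by (simp add: cesaro_mean_def sum_distrib_left del: sum.lessThan_Suc)

lemma cesaro_mean_telescope:
  "cesaro_mean (\<lambda>k. f (Suc k) - f k) n = (1 / real (Suc n)) *\<^sub>R (f (Suc n) - f 0)"
  by (simp add: cesaro_mean_def sum_lessThan_telescope del: of_nat_Suc)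

abbreviation cesaro_one_minus_pow :: "'a::real_normed_algebra \<Rightarrow> nat \<Rightarrow> 'a" where
  "cesaro_one_minus_pow s \<equiv> cesaro_mean (\<lambda>k. one_minus_pow s (Suc k))"

lemma norm_defect_cesaro_le:
  assumes "\<And>c. norm (c - s * c) \<le> norm c"
  shows "norm (c - cesaro_one_minus_pow s n * c) \<le> norm c"
proof -
  have "c - cesaro_one_minus_pow s n * c = cesaro_mean (\<lambda>k. c - one_minus_pow s (Suc k) * c) n"
    by (simp add: cesaro_mean_diff cesaro_mean_const cesaro_mean_mult_right del: one_minus_pow.simps)
  also have "norm \<dots> \<le> norm c"
    by (intro norm_cesaro_mean_le norm_one_minus_pow_defect_le assms)
  finally show ?thesis .
qed

lemma resolvent_cesaro:
  assumes xs: "x * s = x - s" and sx: "s * x = x - s"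
  shows "x - cesaro_one_minus_pow s n * x = (1 / real (Suc n)) *\<^sub>R one_minus_pow s (Suc n)"
    and "x - x * cesaro_one_minus_pow s n = (1 / real (Suc n)) *\<^sub>R one_minus_pow s (Suc n)"
proof -
  have "x - cesaro_one_minus_pow s n * x = cesaro_mean (\<lambda>k. x - one_minus_pow s (Suc k) * x) n"
    by (simp add: cesaro_mean_diff cesaro_mean_const cesaro_mean_mult_right del: one_minus_pow.simps)
  also have "\<dots> = cesaro_mean (\<lambda>k. one_minus_pow s (Suc k) - one_minus_pow s k) n"
    by (simp only: resolvent_one_minus_pow(1)[OF xs sx])
  finally show "x - cesaro_one_minus_pow s n * x = (1 / real (Suc n)) *\<^sub>R one_minus_pow s (Suc n)"
    by (simp add: cesaro_mean_telescope del: one_minus_pow.simps(2))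
  have "x - x * cesaro_one_minus_pow s n = cesaro_mean (\<lambda>k. x - x * one_minus_pow s (Suc k)) n"
    by (simp add: cesaro_mean_diff cesaro_mean_const cesaro_mean_mult_left del: one_minus_pow.simps)
  also have "\<dots> = cesaro_mean (\<lambda>k. one_minus_pow s (Suc k) - one_minus_pow s k) n"
    by (simp only: resolvent_one_minus_pow(2)[OF xs sx])
  finally show "x - x * cesaro_one_minus_pow s n = (1 / real (Suc n)) *\<^sub>R one_minus_pow s (Suc n)"
    by (simp add: cesaro_mean_telescope del: one_minus_pow.simps(2))
qed

lemma norm_left_defect_le:
  fixes e g :: "'a::real_normed_algebra"
  assumes "0 < \<epsilon>" and g: "\<And>c. norm (c - g * c) \<le> norm c"
  shows "norm (a - g * a) \<le> norm (a - e * a) + norm (\<epsilon> *\<^sub>R e - g * (\<epsilon> *\<^sub>R e)) / \<epsilon> * norm a"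
proof -
  define d where "d = a - e * a"
  have "a - g * a = (d - g * d) + (1 / \<epsilon>) *\<^sub>R ((\<epsilon> *\<^sub>R e - g * (\<epsilon> *\<^sub>R e)) * a)"
    using \<open>0 < \<epsilon>\<close> by (simp add: d_def algebra_simps)
  also have "norm \<dots> \<le> norm d + (1 / \<epsilon>) * (norm (\<epsilon> *\<^sub>R e - g * (\<epsilon> *\<^sub>R e)) * norm a)"
    using norm_triangle_ineq g[of d] norm_mult_ineq \<open>0 < \<epsilon>\<close>
    by (smt (verit) mult_left_mono norm_scaleR zero_le_divide_1_iff)
  finally show ?thesis by (simp add: d_def)
qed

lemma norm_right_defect_le:
  fixes e g :: "'a::real_normed_algebra"
  assumes "0 < \<epsilon>"
  shows "norm (a - a * g) \<le> (1 + norm g) * norm (a - a * e) + norm (\<epsilon> *\<^sub>R e - (\<epsilon> *\<^sub>R e) * g) / \<epsilon> * norm a"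
proof -
  define d where "d = a - a * e"
  have "a - a * g = (d - d * g) + (1 / \<epsilon>) *\<^sub>R (a * (\<epsilon> *\<^sub>R e - (\<epsilon> *\<^sub>R e) * g))"
    using \<open>0 < \<epsilon>\<close> by (simp add: d_def algebra_simps)
  also have "norm \<dots> \<le> (1 + norm g) * norm d + (1 / \<epsilon>) * (norm (\<epsilon> *\<^sub>R e - (\<epsilon> *\<^sub>R e) * g) * norm a)"
  proof -
    have "norm (d - d * g) \<le> (1 + norm g) * norm d"
      using norm_triangle_ineq4[of d "d * g"] norm_mult_ineq[of d g] by (simp add: algebra_simps)
    moreover have "norm (a * (\<epsilon> *\<^sub>R e - (\<epsilon> *\<^sub>R e) * g)) \<le> norm (\<epsilon> *\<^sub>R e - (\<epsilon> *\<^sub>R e) * g) * norm a"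
      using norm_mult_ineq by (simp add: mult.commute)
    ultimately show ?thesis
      using norm_triangle_ineq \<open>0 < \<epsilon>\<close>
      by (smt (verit) mult_left_mono norm_scaleR zero_le_divide_1_iff)
  qed
  finally show ?thesis by (simp add: d_def)
qed

section \<open>Approximate identities in F_A\<close>

lemma exists_FA_approximant:
  fixes sc :: "complex \<Rightarrow> 'a::{real_normed_algebra,banach} \<Rightarrow> 'a" and u :: "'j \<Rightarrow> 'a"
  assumes cs: "complex_scalars sc" and u: "right_bai F u" "\<And>j. norm (u j) \<le> 1"
    and e: "e \<in> rA sc" and eM: "norm e \<le> M"
  shows "\<exists>g. g \<in> FA sc \<and> norm g \<le> 2 \<and>
     (\<forall>a. norm (a - g * a) \<le> norm (a - e * a) + 4 * (M + 1) / real (Suc n) * norm a) \<and>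
     (\<forall>a. norm (a - a * g) \<le> 3 * norm (a - a * e) + 4 * (M + 1) / real (Suc n) * norm a)"
proof -
  define \<epsilon> where "\<epsilon> = 1 / (2 * (M + 1))"
  have M: "0 \<le> M" using eM norm_ge_zero order_trans by blast
  have \<epsilon>: "0 < \<epsilon>" using M by (simp add: \<epsilon>_def)
  have "norm (\<epsilon> *\<^sub>R e) \<le> \<epsilon> * M"
    using eM \<epsilon> by (simp add: mult_left_mono)
  also have "\<dots> < 1" using M by (simp add: \<epsilon>_def field_simps)
  finally obtain s where xs: "(\<epsilon> *\<^sub>R e) * s = \<epsilon> *\<^sub>R e - s" and sx: "s * (\<epsilon> *\<^sub>R e) = \<epsilon> *\<^sub>R e - s"
    using exists_resolvent by blast
  have s: "norm (c - s * c) \<le> norm c" for c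
    by (rule norm_defect_resolvent_le[OF cs e _ xs]) (use \<epsilon> in simp)
  define g where "g = cesaro_one_minus_pow s n"
  have g: "norm (c - g * c) \<le> norm c" for c
    unfolding g_def by (rule norm_defect_cesaro_le[OF s])
  have pow: "norm (one_minus_pow s k) \<le> 2" for k
    by (rule norm_le_two_if_defect_le[OF u norm_one_minus_pow_defect_le[OF s]])
  have g2: "norm g \<le> 2"
    unfolding g_def by (rule norm_cesaro_mean_le[OF pow])
  have "norm ((1 / real (Suc n)) *\<^sub>R one_minus_pow s (Suc n)) / \<epsilon>
      = 2 * (M + 1) / real (Suc n) * norm (one_minus_pow s (Suc n))"
    by (simp add: \<epsilon>_def del: one_minus_pow.simps)
  also have "\<dots> \<le> 2 * (M + 1) / real (Suc n) * 2"
    by (rule mult_left_mono[OF pow]) (use M in simp)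
  finally have err: "norm ((1 / real (Suc n)) *\<^sub>R one_minus_pow s (Suc n)) / \<epsilon> \<le> 4 * (M + 1) / real (Suc n)"
    by simp
  have "norm (a - g * a) \<le> norm (a - e * a) + 4 * (M + 1) / real (Suc n) * norm a" for a
    using norm_left_defect_le[OF \<epsilon> g, of a e] err mult_right_mono[OF err norm_ge_zero[of a]]
    unfolding g_def resolvent_cesaro(1)[OF xs sx] by linarith
  moreover have "norm (a - a * g) \<le> 3 * norm (a - a * e) + 4 * (M + 1) / real (Suc n) * norm a" for a
  proof -
    have "(1 + norm g) * norm (a - a * e) \<le> 3 * norm (a - a * e)"
      using g2 by (intro mult_right_mono) auto
    then show ?thesis
      using norm_right_defect_le[OF \<epsilon>, of a g e] mult_right_mono[OF err norm_ge_zero[of a]]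
      unfolding g_def resolvent_cesaro(2)[OF xs sx] by linarith
  qed
  ultimately show ?thesis
    using FA_if_contractive[OF cs g] g2 by blast
qed

lemma tendsto_prod_sequentially_if_dominated:
  fixes X :: "'i \<times> nat \<Rightarrow> 'a::real_normed_vector" and Y :: "'i \<Rightarrow> 'a"
  assumes bound: "\<And>i n. norm (a - X (i, n)) \<le> C * norm (a - Y i) + K / real (Suc n)"
    and Y: "(Y \<longlongrightarrow> a) F"
  shows "(X \<longlongrightarrow> a) (F \<times>\<^sub>F sequentially)"
proof -
  have "((\<lambda>i. norm (a - Y i)) \<longlongrightarrow> 0) F"
    using tendsto_norm_zero[OF LIM_zero[OF Y]] by (simp add: norm_minus_commute)
  then have "((\<lambda>p. C * norm (a - Y (fst p))) \<longlongrightarrow> 0) (F \<times>\<^sub>F sequentially)"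
    by (intro tendsto_mult_right_zero filterlim_compose[OF _ filterlim_fst])
  moreover have "((\<lambda>p. K / real (Suc (snd p))) \<longlongrightarrow> 0) (F \<times>\<^sub>F sequentially)"
    by (rule filterlim_compose[OF LIMSEQ_Suc[OF lim_const_over_n] filterlim_snd])
  ultimately have majorant: "((\<lambda>p. C * norm (a - Y (fst p)) + K / real (Suc (snd p))) \<longlongrightarrow> 0) (F \<times>\<^sub>F sequentially)"
    by (rule tendsto_add_zero)
  have "((\<lambda>p. a - X p) \<longlongrightarrow> 0) (F \<times>\<^sub>F sequentially)"
    by (rule Lim_null_comparison[OF _ majorant], intro always_eventually) (simp add: split_paired_All bound del: of_nat_Suc)
  then show ?thesis
    using tendsto_diff[OF tendsto_const[of a], of "\<lambda>p. a - X p" 0] by simp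
qed

lemma exists_FA_net:
  fixes sc :: "complex \<Rightarrow> 'a::{real_normed_algebra,banach} \<Rightarrow> 'a"
    and u :: "'j \<Rightarrow> 'a" and F :: "'i filter" and e :: "'i \<Rightarrow> 'a"
  assumes cs: "complex_scalars sc" and u: "right_bai F0 u" "\<And>j. norm (u j) \<le> 1"
    and F: "F \<noteq> bot" and eM: "\<And>i. norm (e i) \<le> M" and e: "range e \<subseteq> rA sc"
  shows "\<exists>(G::'a filter) g. G \<noteq> bot \<and> (\<forall>z. norm (g z) \<le> 2) \<and> range g \<subseteq> FA sc \<and>
     (\<forall>a. ((\<lambda>i. e i * a) \<longlongrightarrow> a) F \<longrightarrow> ((\<lambda>z. g z * a) \<longlongrightarrow> a) G) \<and>
     (\<forall>a. ((\<lambda>i. a * e i) \<longlongrightarrow> a) F \<longrightarrow> ((\<lambda>z. a * g z) \<longlongrightarrow> a) G)"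
proof -
  have "\<forall>p. \<exists>h. h \<in> FA sc \<and> norm h \<le> 2 \<and>
     (\<forall>a. norm (a - h * a) \<le> norm (a - e (fst p) * a) + 4 * (M + 1) / real (Suc (snd p)) * norm a) \<and>
     (\<forall>a. norm (a - a * h) \<le> 3 * norm (a - a * e (fst p)) + 4 * (M + 1) / real (Suc (snd p)) * norm a)"
    using exists_FA_approximant[OF cs u] e eM by blast
  then obtain h where h: "\<And>p. h p \<in> FA sc" "\<And>p. norm (h p) \<le> 2"
    and left: "\<And>i n a. norm (a - h (i, n) * a) \<le> 1 * norm (a - e i * a) + 4 * (M + 1) * norm a / real (Suc n)"
    and right: "\<And>i n a. norm (a - a * h (i, n)) \<le> 3 * norm (a - a * e i) + 4 * (M + 1) * norm a / real (Suc n)"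
    unfolding choice_iff by (fastforce simp: field_simps)
  \<comment> \<open>Pushed forward to a filter on A, the net h becomes the identity on its range.\<close>
  define K where "K = {z. z \<in> FA sc \<and> norm z \<le> 2}"
  define g where "g z = (if z \<in> K then z else 0)" for z
  define G where "G = filtermap h (F \<times>\<^sub>F sequentially)"
  have gh: "g (h p) = h p" for p
    using h by (simp add: g_def K_def)
  have "G \<noteq> bot"
    using F by (simp add: G_def filtermap_bot_iff prod_filter_eq_bot)
  moreover have "norm (g z) \<le> 2" "g z \<in> FA sc" for z
    using FA_if_contractive[OF cs, of 0] by (simp_all add: g_def K_def)
  moreover have "((\<lambda>z. g z * a) \<longlongrightarrow> a) G" if "((\<lambda>i. e i * a) \<longlongrightarrow> a) F" for a
    unfolding G_def filterlim_filtermap gh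
    by (rule tendsto_prod_sequentially_if_dominated[OF left that])
  moreover have "((\<lambda>z. a * g z) \<longlongrightarrow> a) G" if "((\<lambda>i. a * e i) \<longlongrightarrow> a) F" for a
    unfolding G_def filterlim_filtermap gh
    by (rule tendsto_prod_sequentially_if_dominated[OF right that])
  ultimately show ?thesis by blast
qed

theorem corollary3p9:
  fixes sc :: "complex \<Rightarrow> 'a::{real_normed_algebra,banach} \<Rightarrow> 'a"
    and F0 :: "'j filter" and e0 :: "'j \<Rightarrow> 'a"
  assumes "complex_scalars sc"
    and "contractive_ai F0 e0"
  shows "((\<exists>(F::'i filter) e. left_bai F e \<and> range e \<subseteq> rA sc) \<longrightarrow>
            (\<exists>(G::'a filter) g. left_bai G g \<and> range g \<subseteq> FA sc)) \<and>
         ((\<exists>(F::'i filter) e. right_bai F e \<and> range e \<subseteq> rA sc) \<longrightarrow>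
            (\<exists>(G::'a filter) g. right_bai G g \<and> range g \<subseteq> FA sc)) \<and>
         ((\<exists>(F::'i filter) e. two_sided_bai F e \<and> range e \<subseteq> rA sc) \<longrightarrow>
            (\<exists>(G::'a filter) g. two_sided_bai G g \<and> range g \<subseteq> FA sc))"
proof -
  have u: "right_bai F0 e0" "\<And>j. norm (e0 j) \<le> 1"
    using assms(2) by (auto simp: contractive_ai_def two_sided_bai_def)
  note net = exists_FA_net[OF assms(1) u]
  show ?thesis
    unfolding two_sided_bai_def left_bai_def right_bai_def
    by (metis net)
qed

end
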